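(* Let $I$ be a general ring and $e=e^2\in I$. Then $QN(eIe)=eIe\cap QN(I)$.
   Context: A general ring is an associative ring not necessarily having an identity; $eIe=\{eae\mid a\in I\}$ is a general ring under the operations of $I$. For a general ring $K$ and $p,q\in K$, $p*q=p+q-pq$; $Q(K)=\{q\in K\mid p*q=0=q*p\text{ for some }p\in K\}$; $\mathrm{comm}_K(q)=\{x\in K\mid xq=qx\}$; $QN(K)=\{q\in K\mid qx\in Q(K)\text{ for every }x\in\mathrm{comm}_K(q)\}$. *)

theory Defs
  imports Main
begin

text \<open>General rings (associative, not necessarily unital) are modelled by the
type class ring. Quasi-inverse notions are defined relative to a carrier K
(a subset closed under the ring operations, e.g. the corner ring eIe).\<close>

definition qcirc :: "'a::ring \<Rightarrow> 'a \<Rightarrow> 'a" where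
  "qcirc p q = p + q - p * q"

definition Qset :: "'a::ring set \<Rightarrow> 'a set" where
  "Qset K = {q \<in> K. \<exists>p\<in>K. qcirc p q = 0 \<and> qcirc q p = 0}"

definition comm_in :: "'a::ring set \<Rightarrow> 'a \<Rightarrow> 'a set" where
  "comm_in K q = {x \<in> K. x * q = q * x}"

definition QN :: "'a::ring set \<Rightarrow> 'a set" where
  "QN K = {q \<in> K. \<forall>x\<in>comm_in K q. q * x \<in> Qset K}"

definition corner :: "'a::ring \<Rightarrow> 'a set \<Rightarrow> 'a set" where
  "corner e I = {e * a * e | a. a \<in> I}"

end

theory Submission
  imports Defs
begin

text \<open>Since p = pq - q = qp - q whenever p is a quasi-inverse of q, a quasi-inverse of
an element of eIe lies again in eIe, so quasi-regularity in eIe is quasi-regularity in I.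
For q in eIe, an element x of I commuting with q may be replaced by its compression exe:
this lies in eIe, still commutes with q, and q(exe) = qx. Conversely the products qx with
x in eIe commuting with q already lie in eIe.\<close>

lemma mem_corner_iff:
  fixes e :: "'a::ring"
  assumes "e * e = e"
  shows "y \<in> corner e UNIV \<longleftrightarrow> e * y = y \<and> y * e = y"
proof
  assume "y \<in> corner e UNIV"
  then obtain a where y: "y = e * a * e" by (auto simp: corner_def)
  have "e * y = (e * e) * a * e" "y * e = e * a * (e * e)"
    by (simp_all add: y mult.assoc)
  with assms y show "e * y = y \<and> y * e = y" by simp
next
  assume "e * y = y \<and> y * e = y"
  then have "y = e * y * e" by simp
  then show "y \<in> corner e UNIV" by (auto simp: corner_def)
qed

lemma compression_mem_corner: "e * x * e \<in> corner e UNIV"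
  by (auto simp: corner_def)

lemma quasi_inverse_mem_corner:
  fixes e :: "'a::ring"
  assumes "e * e = e" and q: "q \<in> corner e UNIV"
    and "qcirc p q = 0" "qcirc q p = 0"
  shows "p \<in> corner e UNIV"
proof -
  have eq: "e * q = q" and qe: "q * e = q" using q mem_corner_iff[OF assms(1)] by auto
  have p_left: "p = p * q - q" and p_right: "p = q * p - q"
    using assms(3,4) by (simp_all add: qcirc_def algebra_simps)
  have "p * e = p * (q * e) - q * e" by (subst p_left) (simp add: algebra_simps mult.assoc)
  also have "\<dots> = p" using qe p_left by simp
  finally have "p * e = p" .
  moreover have "e * p = (e * q) * p - e * q" by (subst p_right) (simp add: algebra_simps mult.assoc)
  then have "e * p = p" using eq p_right by simp
  ultimately show ?thesis using mem_corner_iff[OF assms(1)] by simp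
qed

lemma Qset_corner:
  fixes e :: "'a::ring"
  assumes "e * e = e"
  shows "Qset (corner e UNIV) = corner e UNIV \<inter> Qset UNIV"
  using quasi_inverse_mem_corner[OF assms] by (auto simp: Qset_def)

lemma corner_mult_closed:
  fixes e :: "'a::ring"
  assumes "e * e = e" "a \<in> corner e UNIV" "b \<in> corner e UNIV"
  shows "a * b \<in> corner e UNIV"
proof -
  have "e * a = a" "b * e = b" using assms mem_corner_iff[OF assms(1)] by auto
  then have "e * (a * b) = a * b" "(a * b) * e = a * b"
    by (metis mult.assoc)+
  then show ?thesis using mem_corner_iff[OF assms(1)] by simp
qed

lemma compression_commutes:
  fixes e :: "'a::ring"
  assumes "e * e = e" and q: "q \<in> corner e UNIV" and xq: "x * q = q * x"
  shows "(e * x * e) * q = q * (e * x * e)" and "q * (e * x * e) = q * x"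
proof -
  have eq: "e * q = q" and qe: "q * e = q" using q mem_corner_iff[OF assms(1)] by auto
  have "(e * x * e) * q = e * (x * q)" by (simp add: eq mult.assoc)
  also have "\<dots> = q * x" by (simp add: xq eq mult.assoc[symmetric])
  finally have left: "(e * x * e) * q = q * x" .
  have "q * (e * x * e) = (x * q) * e" by (simp add: xq qe mult.assoc[symmetric])
  also have "\<dots> = q * x" by (metis xq qe mult.assoc)
  finally show "q * (e * x * e) = q * x" .
  with left show "(e * x * e) * q = q * (e * x * e)" by simp
qed

theorem lemma3p4:
  fixes e :: "'a::ring"
  assumes "e * e = e"
  shows "QN (corner e UNIV) = corner e UNIV \<inter> QN UNIV"
proof (intro equalityI subsetI)
  fix q assume q: "q \<in> QN (corner e UNIV)"
  then have qC: "q \<in> corner e UNIV" by (simp add: QN_def)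
  have "q * x \<in> Qset UNIV" if "x * q = q * x" for x
  proof -
    note compressed = compression_commutes[OF assms qC that]
    have "e * x * e \<in> comm_in (corner e UNIV) q"
      using compressed(1) compression_mem_corner by (simp add: comm_in_def)
    then have "q * (e * x * e) \<in> Qset (corner e UNIV)" using q by (simp add: QN_def)
    then show ?thesis using compressed(2) Qset_corner[OF assms] by simp
  qed
  with qC show "q \<in> corner e UNIV \<inter> QN UNIV" by (simp add: QN_def comm_in_def)
next
  fix q assume q: "q \<in> corner e UNIV \<inter> QN UNIV"
  have "q * x \<in> Qset (corner e UNIV)" if x: "x \<in> comm_in (corner e UNIV) q" for x
  proof -
    have "q * x \<in> Qset UNIV" using x q by (simp add: QN_def comm_in_def)
    moreover have "q * x \<in> corner e UNIV"
      using x q corner_mult_closed[OF assms] by (simp add: comm_in_def)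
    ultimately show ?thesis using Qset_corner[OF assms] by simp
  qed
  with q show "q \<in> QN (corner e UNIV)" by (auto simp: QN_def)
qed

end
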